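(* Let $n \ge 1$ and $p \ge 2$, and let $D=\{x_{ij}\}\in\mathbb{R}^{n\times p}$ be a dataset (rows $i=1,\dots,n$ are individuals, columns $j=1,\dots,p$ are variables) with no ties at the medians, i.e. for every $j=1,\dots,p$, $\sum_{i=1}^n \mathbb{I}\big(x_{ij}=\operatorname{med}(X_j)\big)\le 1$. Let $D'=\{x'_{ij}\}\in\mathbb{R}^{n\times p}$ be any neighboring dataset of $D$ which also has no ties at the medians. For $1\le j<j'\le p$ define $$t_{jj'}(D)=\sum_{i=1}^n \mathbb{I}\big(x_{ij}\ge \operatorname{med}(X_j),\ x_{ij'}\ge \operatorname{med}(X_{j'})\big).$$ Then for any $1\le j<j'\le p$, the $\ell_1$-sensitivity of $t_{jj'}$, over pairs of neighboring datasets with no ties at the medians, is $\Delta(t_{jj'})=\max_{D\sim D'}|t_{jj'}(D)-t_{jj'}(D')|=1$.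
   Context: $\operatorname{med}(X_j)$ denotes the sample median of the column $\{x_{1j},\dots,x_{nj}\}$; the convention is that when $n$ is even exactly $n/2$ observations satisfy $x_{ij}\ge\operatorname{med}(X_j)$, and when $n$ is odd exactly $(n+1)/2$ do. $\mathbb{I}(\cdot)$ is the indicator function. Two datasets $D,D'\in\mathbb{R}^{n\times p}$ are neighboring (written $D\sim D'$) if they have the same number $n$ of rows and differ by substitution of the data of a single individual, i.e. they agree in all rows except at most one. The $\ell_1$-sensitivity of a function $M$ is $\Delta(M)=\max_{D\sim D'}\|M(D)-M(D')\|_1$. *)

theory Defs
  imports Complex_Main
begin

text \<open>A dataset with n rows (individuals, indexed 0..n-1) and p columns
(variables, indexed 0..p-1) is a function D :: nat => nat => real, entry D i j = x_ij.
Entries outside the index ranges are irrelevant.\<close>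

type_synonym dataset = "nat \<Rightarrow> nat \<Rightarrow> real"

definition col :: "nat \<Rightarrow> dataset \<Rightarrow> nat \<Rightarrow> real list" where
  "col n D j = map (\<lambda>i. D i j) [0..<n]"

definition med :: "real list \<Rightarrow> real" where
  "med xs = (let ys = sort xs; m = length xs in
     if odd m then ys ! (m div 2) else (ys ! (m div 2 - 1) + ys ! (m div 2)) / 2)"

definition no_ties :: "nat \<Rightarrow> nat \<Rightarrow> dataset \<Rightarrow> bool" where
  "no_ties n p D \<longleftrightarrow> (\<forall>j<p. card {i. i < n \<and> D i j = med (col n D j)} \<le> 1)"

definition neighboring :: "nat \<Rightarrow> nat \<Rightarrow> dataset \<Rightarrow> dataset \<Rightarrow> bool" where
  "neighboring n p D D' \<longleftrightarrow> (\<exists>k<n. \<forall>i<n. \<forall>j<p. i \<noteq> k \<longrightarrow> D i j = D' i j)"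

definition t_stat :: "nat \<Rightarrow> nat \<Rightarrow> nat \<Rightarrow> dataset \<Rightarrow> nat" where
  "t_stat n j j' D = card {i. i < n \<and> D i j \<ge> med (col n D j) \<and> D i j' \<ge> med (col n D j')}"

end

theory Submission
  imports Defs
begin

text \<open>Without ties, exactly n - n div 2 entries of every column lie at or above its median,
whatever the data. Replacing row k only moves the medians, so outside k the upper sets of a
column in D and D' are nested; having equal cardinalities, they then differ outside k in at
most one row, and only if k enters the upper set. Intersecting the upper sets of columns j
and j' therefore changes t by at most one. The bound is attained by the data x_ij = i with
the top entry of column j' moved to the bottom: the last row stays in the upper set of column
j but leaves that of column j'.\<close>

definition above_med :: "nat \<Rightarrow> dataset \<Rightarrow> nat \<Rightarrow> nat set" where
  "above_med n D j = {i. i < n \<and> med (col n D j) \<le> D i j}"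

lemma t_stat_eq_card_above_med:
  "t_stat n j j' D = card (above_med n D j \<inter> above_med n D j')"
  unfolding t_stat_def above_med_def by (rule arg_cong[where f = card]) auto

lemma med_sort [simp]: "med (sort xs) = med xs"
  unfolding med_def by (simp add: Let_def sorted_sort_id)

lemma length_filter_sort: "length (filter P (sort xs)) = length (filter P xs)"
  by (simp add: filter_sort)

lemma length_filter_col: "length (filter P (col n D j)) = card {i. i < n \<and> P (D i j)}"
  unfolding length_filter_conv_card col_def by (auto intro!: arg_cong[where f = card])

lemma sorted_threshold_indices:
  fixes ys :: "'a::linorder list"
  assumes "sorted ys" and "m < length ys" and "v \<le> ys ! m" and "0 < m \<Longrightarrow> ys ! (m - 1) < v"
  shows "{i. i < length ys \<and> v \<le> ys ! i} = {m..<length ys}"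
proof (intro set_eqI iffI)
  fix i assume i: "i \<in> {i. i < length ys \<and> v \<le> ys ! i}"
  have "m \<le> i"
  proof (rule ccontr)
    assume "\<not> m \<le> i"
    then have "0 < m" and "i \<le> m - 1" by auto
    then have "ys ! i \<le> ys ! (m - 1)"
      using assms(2) sorted_nth_mono[OF assms(1)] by simp
    then have "v \<le> ys ! (m - 1)" using i by (blast intro: order_trans)
    then show False using assms(4)[OF \<open>0 < m\<close>] by (blast dest: leD)
  qed
  then show "i \<in> {m..<length ys}" using i by simp
next
  fix i assume "i \<in> {m..<length ys}"
  then show "i \<in> {i. i < length ys \<and> v \<le> ys ! i}"
    using sorted_nth_mono[OF assms(1), of m i] assms(3) by auto
qed

lemma sorted_med_bounds:
  fixes ys :: "real list"
  assumes sorted: "sorted ys" and "ys \<noteq> []"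
    and ties: "length (filter (\<lambda>x. x = med ys) ys) \<le> 1"
  defines "m \<equiv> length ys div 2"
  shows "med ys \<le> ys ! m" and "0 < m \<Longrightarrow> ys ! (m - 1) < med ys"
proof -
  let ?n = "length ys"
  have m_less: "m < ?n" using \<open>ys \<noteq> []\<close> by (simp add: m_def)
  have med_eq: "med ys = (if odd ?n then ys ! m else (ys ! (m - 1) + ys ! m) / 2)"
    using sorted by (simp add: med_def m_def Let_def sorted_sort_id)
  have unique: "a = b" if "a < ?n" "b < ?n" "ys ! a = med ys" "ys ! b = med ys" for a b
  proof -
    have "card {i. i < ?n \<and> ys ! i = med ys} \<le> 1"
      using ties by (simp add: length_filter_conv_card)
    then show ?thesis using that by (auto simp: card_le_Suc0_iff_eq)
  qed
  have below: "ys ! (m - 1) < ys ! m" if "0 < m"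
  proof -
    have "ys ! (m - 1) \<le> ys ! m" using sorted_nth_mono[OF sorted, of "m - 1" m] m_less by simp
    moreover have "ys ! (m - 1) \<noteq> ys ! m"
    proof
      assume eq: "ys ! (m - 1) = ys ! m"
      then have "ys ! (m - 1) = med ys" "ys ! m = med ys"
        using med_eq unique[of m "m - 1"] m_less by (auto split: if_splits)
      then have "m - 1 = m" using unique m_less by simp
      then show False using \<open>0 < m\<close> by simp
    qed
    ultimately show ?thesis by simp
  qed
  have "0 < m" if "even ?n"
    using that \<open>ys \<noteq> []\<close> unfolding m_def by (cases ys) auto
  then show "med ys \<le> ys ! m" and "0 < m \<Longrightarrow> ys ! (m - 1) < med ys"
    using med_eq below by auto
qed

lemma length_filter_ge_med:
  fixes xs :: "real list"
  assumes "xs \<noteq> []" and ties: "length (filter (\<lambda>x. x = med xs) xs) \<le> 1"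
  shows "length (filter (\<lambda>x. med xs \<le> x) xs) = length xs - length xs div 2"
proof -
  define ys where "ys = sort xs"
  have ys: "sorted ys" "med ys = med xs" "length ys = length xs"
    by (simp_all add: ys_def)
  have "ys \<noteq> []" using \<open>xs \<noteq> []\<close> ys(3) by auto
  have ties_ys: "length (filter (\<lambda>x. x = med ys) ys) \<le> 1"
    using ties by (simp add: ys_def length_filter_sort)
  have "{i. i < length ys \<and> med ys \<le> ys ! i} = {length ys div 2..<length ys}"
    using sorted_med_bounds[OF ys(1) \<open>ys \<noteq> []\<close> ties_ys] \<open>ys \<noteq> []\<close>
    by (intro sorted_threshold_indices[OF ys(1)]) auto
  then have "length (filter (\<lambda>x. med ys \<le> x) ys) = length ys - length ys div 2"
    by (simp add: length_filter_conv_card)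
  then show ?thesis by (simp add: ys ys_def length_filter_sort)
qed

lemma card_above_med:
  assumes "no_ties n p D" "j < p" "0 < n"
  shows "card (above_med n D j) = n - n div 2"
proof -
  have "col n D j \<noteq> []" "length (col n D j) = n" using \<open>0 < n\<close> by (auto simp: col_def)
  moreover have "card {i. i < n \<and> D i j = med (col n D j)} \<le> 1"
    using assms(1,2) by (simp add: no_ties_def)
  ultimately show ?thesis
    using length_filter_ge_med[of "col n D j"] by (simp add: above_med_def length_filter_col)
qed

lemma threshold_sets_nested_off:
  fixes f g :: "nat \<Rightarrow> real"
  assumes "\<forall>i<n. i \<noteq> k \<longrightarrow> f i = g i"
  shows "{i. i < n \<and> a \<le> f i} - {k} \<subseteq> {i. i < n \<and> b \<le> g i} - {k} \<or>
         {i. i < n \<and> b \<le> g i} - {k} \<subseteq> {i. i < n \<and> a \<le> f i} - {k}"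
  using assms by (cases "a \<le> b") force+

lemma card_Diff_remove_le_if_equicard_nested:
  assumes "finite S" "finite S'" "card S = card S'"
    and "S - {k} \<subseteq> S' - {k} \<or> S' - {k} \<subseteq> S - {k}"
  shows "card (S - S' - {k}) \<le> of_bool (k \<in> S' \<and> k \<notin> S)"
proof (cases "S - {k} \<subseteq> S' - {k}")
  case True
  then have "S - S' - {k} = {}" by blast
  then show ?thesis by (simp only: card.empty zero_le)
next
  case False
  then have sub: "S' - {k} \<subseteq> S - {k}" using assms(4) by blast
  have "S - S' - {k} = (S - {k}) - (S' - {k})" by blast
  then have "card (S - S' - {k}) = card (S - {k}) - card (S' - {k})"
    using card_Diff_subset[OF _ sub] assms(2) by simp
  moreover have "k \<in> S' \<Longrightarrow> 0 < card S'" using assms(2) card_gt_0_iff by blast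
  ultimately show ?thesis
    using assms(3) by (cases "k \<in> S"; cases "k \<in> S'") (simp_all add: card_Diff_singleton_if)
qed

lemma card_Int_le_Suc_if_equicard_nested:
  assumes "finite S" "finite S'" "card S = card S'"
    and "S - {k} \<subseteq> S' - {k} \<or> S' - {k} \<subseteq> S - {k}"
    and "finite T" "finite T'" "card T = card T'"
    and "T - {k} \<subseteq> T' - {k} \<or> T' - {k} \<subseteq> T - {k}"
  shows "card (S \<inter> T) \<le> card (S' \<inter> T') + 1"
proof -
  let ?U = "S' \<inter> T' - {k}" and ?X = "S - S' - {k}" and ?Y = "T - T' - {k}"
  have "card (S \<inter> T - {k}) \<le> card (?U \<union> ?X \<union> ?Y)"
    by (rule card_mono) (use assms(1,2,5) in auto)
  also have "\<dots> \<le> card ?U + card ?X + card ?Y"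
    using card_Un_le[of "?U \<union> ?X" ?Y] card_Un_le[of ?U ?X] by linarith
  finally have off_k: "card (S \<inter> T - {k}) \<le> card ?U + card ?X + card ?Y" .
  have split_k: "card A = card (A - {k}) + of_bool (k \<in> A)" if "finite A" for A :: "'a set"
    using that card_Suc_Diff1[of A k] by (cases "k \<in> A") auto
  have "card ?X \<le> of_bool (k \<in> S' \<and> k \<notin> S)"
    using assms(1-4) by (rule card_Diff_remove_le_if_equicard_nested)
  moreover have "card ?Y \<le> of_bool (k \<in> T' \<and> k \<notin> T)"
    using assms(5-8) by (rule card_Diff_remove_le_if_equicard_nested)
  moreover have "of_bool (k \<in> S' \<and> k \<notin> S) + of_bool (k \<in> T' \<and> k \<notin> T) + of_bool (k \<in> S \<inter> T)
      \<le> of_bool (k \<in> S' \<inter> T') + (1::nat)"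
    by auto
  ultimately show ?thesis
    using off_k split_k[of "S \<inter> T"] split_k[of "S' \<inter> T'"] assms(1,2) by simp
qed

lemma neighboring_sym: "neighboring n p D D' \<Longrightarrow> neighboring n p D' D"
  unfolding neighboring_def by metis

lemma t_stat_le_Suc_if_neighboring:
  assumes "0 < n" "j < p" "j' < p"
    and "no_ties n p D" "no_ties n p D'" "neighboring n p D D'"
  shows "t_stat n j j' D \<le> t_stat n j j' D' + 1"
proof -
  obtain k where k: "\<forall>i<n. \<forall>c<p. i \<noteq> k \<longrightarrow> D i c = D' i c"
    using assms(6) unfolding neighboring_def by blast
  have card_eq: "card (above_med n D c) = card (above_med n D' c)" if "c < p" for c
    using card_above_med assms(1,4,5) that by metis
  have nested: "above_med n D c - {k} \<subseteq> above_med n D' c - {k} \<or>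
                above_med n D' c - {k} \<subseteq> above_med n D c - {k}" if "c < p" for c
    unfolding above_med_def by (rule threshold_sets_nested_off) (use k that in blast)
  have fin: "finite (above_med n E c)" for E c by (simp add: above_med_def)
  show ?thesis
    unfolding t_stat_eq_card_above_med
    by (rule card_Int_le_Suc_if_equicard_nested[OF fin fin card_eq nested fin fin card_eq nested])
      (use assms(2,3) in simp_all)
qed

lemma t_stat_neighboring_diff_le_one:
  assumes "0 < n" "j < p" "j' < p"
    and "no_ties n p D" "no_ties n p D'" "neighboring n p D D'"
  shows "\<bar>int (t_stat n j j' D) - int (t_stat n j j' D')\<bar> \<le> 1"
  using t_stat_le_Suc_if_neighboring[OF assms]
    t_stat_le_Suc_if_neighboring[OF assms(1-3,5,4) neighboring_sym[OF assms(6)]]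
  by linarith

lemma no_ties_if_inj_columns:
  assumes "\<And>c. inj_on (\<lambda>i. D i c) {..<n}"
  shows "no_ties n p D"
proof -
  have "card {i. i < n \<and> D i c = v} \<le> 1" for c v
  proof -
    have "{i. i < n \<and> D i c = v} = (\<lambda>i. D i c) -` {v} \<inter> {..<n}" by auto
    then show ?thesis using card_vimage_inj_on_le[OF assms, of "{v}" c] by simp
  qed
  then show ?thesis by (simp add: no_ties_def)
qed

lemma exists_neighboring_t_stat_ne:
  assumes "2 \<le> n" and "j < p" "j' < p" "j \<noteq> j'"
  obtains D D' where "no_ties n p D" "no_ties n p D'" "neighboring n p D D'"
    and "t_stat n j j' D \<noteq> t_stat n j j' D'"
proof
  define D :: dataset where "D = (\<lambda>i c. real i)"
  define D' :: dataset where "D' = D(n - 1 := (D (n - 1))(j' := -1))"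
  show nt: "no_ties n p D" "no_ties n p D'"
    by (auto intro!: no_ties_if_inj_columns inj_onI simp: D_def D'_def split: if_splits)
  show "neighboring n p D D'"
    using assms(1) unfolding neighboring_def by (intro exI[of _ "n - 1"]) (simp add: D'_def)
  define c where "c = n - n div 2"
  have c: "0 < c" "c < n" using assms(1) by (auto simp: c_def)
  have card_above: "card (above_med n E i) = c" if "no_ties n p E" "i < p" for E i
    using card_above_med[OF that] assms(1) by (simp add: c_def)
  have "above_med n D j' = above_med n D j"
    by (simp add: above_med_def col_def D_def)
  then have "t_stat n j j' D = c"
    using card_above[OF nt(1) assms(2)] by (simp add: t_stat_eq_card_above_med)
  moreover have "t_stat n j j' D' < c"
  proof -
    let ?A = "above_med n D' j" and ?B = "above_med n D' j'"
    have card_A: "card ?A = c" and card_B: "card ?B = c"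
      using card_above[OF nt(2)] assms(2,3) by auto
    have col_j: "D' r j = real r" for r using assms(4) by (simp add: D'_def D_def)
    obtain i where "i \<in> ?A" using card_A c(1) by fastforce
    then have "med (col n D' j) \<le> real i" and "i < n" by (simp_all add: above_med_def col_j)
    then have "med (col n D' j) \<le> D' (n - 1) j" by (simp add: col_j)
    then have "n - 1 \<in> ?A" using assms(1) by (simp add: above_med_def)
    moreover have "n - 1 \<notin> ?B"
    proof -
      have "?B \<noteq> {..<n}" using card_B c(2) by (metis card_lessThan less_irrefl)
      then obtain i where "i < n" "i \<notin> ?B" by (auto simp: above_med_def)
      then have "D' (n - 1) j' < med (col n D' j')"
        by (auto simp: above_med_def D'_def D_def split: if_splits)
      then show ?thesis by (simp add: above_med_def)
    qed
    ultimately have "?A \<inter> ?B \<subset> ?A" by blast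
    then have "card (?A \<inter> ?B) < c"
      using card_A psubset_card_mono[of ?A] by (simp add: above_med_def)
    then show ?thesis by (simp add: t_stat_eq_card_above_med)
  qed
  ultimately show "t_stat n j j' D \<noteq> t_stat n j j' D'" by simp
qed

theorem theorem1:
  fixes n p j j' :: nat
  assumes "n \<ge> 2" and "p \<ge> 2" and "j < j'" and "j' < p"
  shows "Max {\<bar>int (t_stat n j j' D) - int (t_stat n j j' D')\<bar> | D D'.
               no_ties n p D \<and> no_ties n p D' \<and> neighboring n p D D'} = 1"
proof -
  define M where "M = {\<bar>int (t_stat n j j' D) - int (t_stat n j j' D')\<bar> | D D'.
               no_ties n p D \<and> no_ties n p D' \<and> neighboring n p D D'}"
  have M_sub: "M \<subseteq> {0, 1}"
    unfolding M_def using t_stat_neighboring_diff_le_one[of n j p j'] assms by fastforce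
  obtain D D' where "no_ties n p D" "no_ties n p D'" "neighboring n p D D'"
    and "t_stat n j j' D \<noteq> t_stat n j j' D'"
    using exists_neighboring_t_stat_ne[of n j p j'] assms by auto
  then have "\<bar>int (t_stat n j j' D) - int (t_stat n j j' D')\<bar> \<in> M - {0}"
    unfolding M_def by auto
  with M_sub have "1 \<in> M" by auto
  have "Max M = 1"
  proof (rule Max_eqI)
    show "finite M" using M_sub by (rule finite_subset) simp
    show "y \<le> 1" if "y \<in> M" for y using M_sub that by auto
  qed (fact \<open>1 \<in> M\<close>)
  then show ?thesis unfolding M_def .
qed

end
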